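(* The retract variety $\mathbf V(\underline 2,\underline 3)$ is not principal: there is no monounary algebra $A$ with $\mathbf V(A)=\mathbf V(\underline 2,\underline 3)$.
   Context: A monounary algebra is a pair $(A,f)$ with $A$ a nonempty set and $f:A\to A$; direct products are formed coordinatewise. A retract of $A$ is a nonempty subalgebra $M$ such that there is an endomorphism $h:A\to M$ with $h(x)=x$ for all $x\in M$. A retract variety is a class of algebras closed under isomorphisms, retracts and direct products (of set-indexed families); $\mathbf V(\mathcal K)$ denotes the smallest retract variety containing $\mathcal K$, and $\mathbf V(A_1,\dots,A_n)=\mathbf V(\{A_1,\dots,A_n\})$. For $n\in\mathbb N$, $\underline n=(\mathbb Z_n,f)$ with $f(k)=k+1 \pmod n$ (an $n$-element cycle). *)

theory Defs
  imports "HOL-Library.FuncSet"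
begin

type_synonym 'a alg = "'a set \<times> ('a \<Rightarrow> 'a)"

definition monounary :: "'a alg \<Rightarrow> bool" where
  "monounary Af \<longleftrightarrow> fst Af \<noteq> {} \<and> (\<forall>x\<in>fst Af. snd Af x \<in> fst Af)"

definition cyc :: "nat \<Rightarrow> nat alg" where
  "cyc n = ({0..<n}, \<lambda>k. (k + 1) mod n)"

definition prod_alg :: "'i set \<Rightarrow> ('i \<Rightarrow> 'k alg) \<Rightarrow> ('i \<Rightarrow> 'k) alg" where
  "prod_alg I F = (PiE I (\<lambda>i. fst (F i)), \<lambda>x. \<lambda>i\<in>I. snd (F i) (x i))"

definition is_hom :: "'a alg \<Rightarrow> 'b alg \<Rightarrow> ('a \<Rightarrow> 'b) \<Rightarrow> bool" where
  "is_hom A B h \<longleftrightarrow> (\<forall>x\<in>fst A. h x \<in> fst B \<and> h (snd A x) = snd B (h x))"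

definition is_retract :: "'a alg \<Rightarrow> 'a set \<Rightarrow> bool" where
  "is_retract A M \<longleftrightarrow> M \<noteq> {} \<and> M \<subseteq> fst A \<and> (\<forall>x\<in>M. snd A x \<in> M) \<and>
     (\<exists>h. is_hom A (M, snd A) h \<and> (\<forall>x\<in>M. h x = x))"

definition iso_alg :: "'a alg \<Rightarrow> 'b alg \<Rightarrow> bool" where
  "iso_alg A B \<longleftrightarrow> (\<exists>g. bij_betw g (fst A) (fst B) \<and> is_hom A B g)"

text \<open>Since I R P(K) is the smallest retract variety V(K), B \<in> V(K) iff in_IRP K I B for
  some index set I (of some type).\<close>
definition in_IRP :: "'k alg set \<Rightarrow> 'i set \<Rightarrow> 'c alg \<Rightarrow> bool" where
  "in_IRP K I B \<longleftrightarrow> (\<exists>F. (\<forall>i\<in>I. F i \<in> K) \<and>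
      (\<exists>M. is_retract (prod_alg I F) M \<and> iso_alg B (M, snd (prod_alg I F))))"

end

theory Submission
  imports Defs
begin

text \<open>
  If \<open>V(A) = V(2, 3)\<close>, then \<open>A\<close> embeds into a product of 2- and 3-cycles, while
  \<open>2, 3 \<in> V(A)\<close> force \<open>A\<close> to contain a non-fixed point \<open>a\<close> with \<open>f\<^sup>2 a = a\<close> and a point
  \<open>b\<close> with \<open>f\<^sup>3 b = b\<close>. In an \<open>n\<close>-cycle \<open>f\<^sup>m\<close> has a fixed point only if \<open>n\<close> divides \<open>m\<close>, so
  looking at the images of \<open>a\<close> and \<open>b\<close>, no coordinate can be a 3-cycle or a 2-cycle.
  Hence the product has no coordinates, i.e. it is a single point, contradicting \<open>f a \<noteq> a\<close>.
\<close>

lemma monounary_cyc: "0 < n \<Longrightarrow> monounary (cyc n)"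
  unfolding monounary_def cyc_def by auto

lemma fst_cyc: "fst (cyc n) = {0..<n}"
  by (simp add: cyc_def)

lemma fst_prod_alg: "fst (prod_alg I F) = (\<Pi>\<^sub>E i\<in>I. fst (F i))"
  by (simp add: prod_alg_def)

lemma cyc_funpow: "k < n \<Longrightarrow> (snd (cyc n) ^^ m) k = (k + m) mod n"
  by (induction m) (simp_all add: cyc_def mod_Suc_eq)

lemma cyc_funpow_fixed_iff: "k < n \<Longrightarrow> (snd (cyc n) ^^ m) k = k \<longleftrightarrow> n dvd m"
  using mod_eq_dvd_iff_nat[of k "k + m" n] by (simp add: cyc_funpow)

lemma prod_alg_funpow_apply:
  "i \<in> I \<Longrightarrow> (snd (prod_alg I F) ^^ n) x i = (snd (F i) ^^ n) (x i)"
  by (induction n) (simp_all add: prod_alg_def)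

lemma is_hom_funpow:
  assumes hom: "is_hom A B h" and "monounary A" and "x \<in> fst A"
  shows "h ((snd A ^^ n) x) = (snd B ^^ n) (h x)"
proof -
  have closed: "(snd A ^^ n) x \<in> fst A" for n
    using assms(2,3) unfolding monounary_def by (induction n) auto
  show ?thesis
    using hom closed unfolding is_hom_def by (induction n) auto
qed

lemma in_IRP_embeds_into_prod_alg:
  assumes "in_IRP K I B"
  obtains F g where "\<forall>i\<in>I. F i \<in> K" "inj_on g (fst B)" "is_hom B (prod_alg I F) g"
proof -
  from assms obtain F M g where F: "\<forall>i\<in>I. F i \<in> K" and R: "is_retract (prod_alg I F) M"
    and bij: "bij_betw g (fst B) M" and hom: "is_hom B (M, snd (prod_alg I F)) g"
    unfolding in_IRP_def iso_alg_def by auto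
  have "M \<subseteq> fst (prod_alg I F)"
    using R unfolding is_retract_def by blast
  then have "is_hom B (prod_alg I F) g"
    using hom unfolding is_hom_def by auto
  moreover have "inj_on g (fst B)"
    using bij by (rule bij_betw_imp_inj_on)
  ultimately show thesis
    using F that by blast
qed

lemma cyc_length_dvd_period:
  assumes hom: "is_hom B (prod_alg I F) g" and "monounary B"
    and x: "x \<in> fst B" "(snd B ^^ m) x = x"
    and i: "i \<in> I" "F i = cyc n"
  shows "n dvd m"
proof -
  have "g x \<in> fst (prod_alg I F)"
    using hom x(1) unfolding is_hom_def by blast
  then have "g x i \<in> fst (F i)"
    using i(1) by (simp add: fst_prod_alg PiE_iff)
  then have "g x i < n"
    using i(2) by (simp add: fst_cyc)
  moreover have "(snd (cyc n) ^^ m) (g x i) = g x i"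
  proof -
    have "(snd (cyc n) ^^ m) (g x i) = (snd (prod_alg I F) ^^ m) (g x) i"
      using i by (simp add: prod_alg_funpow_apply)
    also have "\<dots> = g ((snd B ^^ m) x) i"
      using is_hom_funpow[OF hom \<open>monounary B\<close> x(1)] by simp
    finally show ?thesis
      using x(2) by simp
  qed
  ultimately show ?thesis
    using cyc_funpow_fixed_iff by blast
qed

lemma periodic_point_if_cyc_in_IRP:
  assumes "in_IRP {(A, f)} J (cyc n)" and "2 \<le> n"
  shows "\<exists>a\<in>A. (f ^^ n) a = a \<and> f a \<noteq> a"
proof -
  obtain F g where F: "\<forall>j\<in>J. F j \<in> {(A, f)}" and inj: "inj_on g {0..<n}"
    and hom: "is_hom (cyc n) (prod_alg J F) g"
    using in_IRP_embeds_into_prod_alg[OF assms(1)] unfolding fst_cyc by blast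
  have F_eq: "F j = (A, f)" if "j \<in> J" for j
    using F that by blast
  have mon: "monounary (cyc n)"
    using assms(2) by (simp add: monounary_cyc)
  define x where "x = g 0"
  have "x \<in> fst (prod_alg J F)"
    using hom assms(2) unfolding x_def is_hom_def by (simp add: fst_cyc)
  also have "fst (prod_alg J F) = (\<Pi>\<^sub>E j\<in>J. A)"
    unfolding fst_prod_alg by (rule PiE_cong) (simp add: F_eq)
  finally have x_in: "x \<in> (\<Pi>\<^sub>E j\<in>J. A)" .
  have "snd (prod_alg J F) x = g (snd (cyc n) 0)"
    using hom assms(2) unfolding x_def is_hom_def by (simp add: fst_cyc)
  also have "snd (cyc n) 0 = 1"
    using assms(2) by (simp add: cyc_def)
  finally have "snd (prod_alg J F) x = g 1" .
  moreover have "g 1 \<noteq> x"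
    using inj assms(2) unfolding x_def by (auto dest: inj_onD)
  moreover have "snd (prod_alg J F) x = (\<lambda>j\<in>J. f (x j))"
    by (simp add: prod_alg_def F_eq cong: restrict_cong)
  ultimately have "(\<lambda>j\<in>J. f (x j)) \<noteq> (\<lambda>j\<in>J. x j)"
    using x_in by simp
  then obtain j where j: "j \<in> J" "f (x j) \<noteq> x j"
    by (meson restrict_ext)
  have "(f ^^ n) (x j) = (snd (prod_alg J F) ^^ n) x j"
    using j(1) F_eq by (simp add: prod_alg_funpow_apply)
  also have "\<dots> = g ((snd (cyc n) ^^ n) 0) j"
    using is_hom_funpow[OF hom mon] assms(2) unfolding x_def by (simp add: fst_cyc)
  also have "\<dots> = x j"
    using assms(2) cyc_funpow_fixed_iff[of 0 n n] unfolding x_def by simp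
  finally show ?thesis
    using j PiE_mem[OF x_in j(1)] by blast
qed

theorem proposition2p1:
  fixes A :: "'a set" and f :: "'a \<Rightarrow> 'a"
    and I :: "'i set" and J :: "'j set" and L :: "'l set"
  assumes "monounary (A, f)"
  shows "\<not> (in_IRP {cyc 2, cyc 3} I (A, f) \<and> in_IRP {(A, f)} J (cyc 2) \<and> in_IRP {(A, f)} L (cyc 3))"
proof
  assume "in_IRP {cyc 2, cyc 3} I (A, f) \<and> in_IRP {(A, f)} J (cyc 2) \<and> in_IRP {(A, f)} L (cyc 3)"
  then have V: "in_IRP {cyc 2, cyc 3} I (A, f)" and two: "in_IRP {(A, f)} J (cyc 2)"
    and three: "in_IRP {(A, f)} L (cyc 3)"
    by auto
  obtain a where a: "a \<in> A" "(f ^^ 2) a = a" "f a \<noteq> a"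
    using periodic_point_if_cyc_in_IRP[OF two] by auto
  obtain b where b: "b \<in> A" "(f ^^ 3) b = b"
    using periodic_point_if_cyc_in_IRP[OF three] by auto
  obtain F g where F: "\<forall>i\<in>I. F i \<in> {cyc 2, cyc 3}" and inj: "inj_on g A"
    and hom: "is_hom (A, f) (prod_alg I F) g"
    using in_IRP_embeds_into_prod_alg[OF V] by auto
  have "I \<noteq> {}"
  proof
    assume "I = {}"
    moreover have "f a \<in> A"
      using assms a(1) unfolding monounary_def by simp
    ultimately have "g (f a) = g a"
      using hom a(1) unfolding is_hom_def by (auto simp: fst_prod_alg)
    then show False
      using inj a \<open>f a \<in> A\<close> by (auto dest: inj_onD)
  qed
  then obtain i n where i: "i \<in> I" "F i = cyc n" and n: "n \<in> {2, 3}"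
    using F by blast
  have "n dvd 2" and "n dvd 3"
    using cyc_length_dvd_period[OF hom assms, of a 2 i n] cyc_length_dvd_period[OF hom assms, of b 3 i n]
      a b i by simp_all
  with n show False
    by auto
qed

end
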